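(* Let $k\ge3$ be an integer, $c>1$ fixed, $\delta=1/c$, $\mathcal N$ a positive integer with $\mathcal N^{1/k}>2$, $\mathcal L=\log \mathcal N^{1/k}$, and $\kappa>0$ fixed. Define $$\mathcal J(z)=\int_2^{\mathcal N^{1/k}} \frac{\delta x^{\delta-1} e(zx^k)}{\log x}\,dx,\qquad \mathcal I(z)=\int_0^{\mathcal N^{1/k}} \delta x^{\delta-1}e(zx^k)\,dx.$$ Then for any nonzero $\beta \in \mathbb R$, $$\mathcal J (\beta) - \mathcal L^{-1} \mathcal I (\beta) \ll \frac{\mathcal N^{\delta/k}}{\mathcal L^{\kappa+2} } + \min\{ \mathcal N^{\delta/k}, |\beta |^{-\delta/k}\}\frac{\log \log \mathcal N}{\mathcal L^2}.$$
   Context: $e(x)=e^{2\pi i x}$. Implied constants may depend on $c,k,\kappa$. *)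

theory Defs
  imports "HOL-Analysis.Analysis"
begin

definition e :: "real \<Rightarrow> complex" where
  "e x = exp (2 * pi * \<i> * complex_of_real x)"

definition calJ :: "real \<Rightarrow> nat \<Rightarrow> nat \<Rightarrow> real \<Rightarrow> complex" where
  "calJ c k N z = integral {2 .. real N powr (1 / real k)}
     (\<lambda>x. complex_of_real ((1/c) * x powr (1/c - 1) / ln x) * e (z * x ^ k))"

text \<open>I(z) = integral over [0, N^(1/k)] of delta x^(delta-1) e(z x^k) (absolutely convergent
  improper integral at 0; Henstock-Kurzweil integral)\<close>
definition calI :: "real \<Rightarrow> nat \<Rightarrow> nat \<Rightarrow> real \<Rightarrow> complex" where
  "calI c k N z = integral {0 .. real N powr (1 / real k)}
     (\<lambda>x. complex_of_real ((1/c) * x powr (1/c - 1)) * e (z * x ^ k))"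

end

theory Submission
  imports Defs
begin

(*
  Put X = N^(1/k) and L = log X. Up to the harmless piece of I over [0, 2], the difference
  J(\<beta>) - I(\<beta>)/L is the integral over [2, X] of \<delta> x^(\<delta>-1) (1/log x - 1/L) e(\<beta> x^k).
  Below the cutoff a = X L^(-A), with A \<delta> = \<kappa> + 2, the trivial bound gives O(a^\<delta>) = O(X^\<delta> / L^(\<kappa>+2)).
  On [a, X] the weight 1/log x - 1/L is nonnegative, decreasing and O(log L / L^2). There the
  integral is bounded trivially by O(X^\<delta> log L / L^2) and, beyond |\<beta>|^(-1/k), by the first
  derivative test applied to x^(\<delta>-k) (1/log x - 1/L) \<cdot> x^(k-1) e(\<beta> x^k), which gives
  O(|\<beta>|^(-\<delta>/k) log L / L^2).
*)

lemma norm_e [simp]: "norm (e y) = 1"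
  unfolding e_def by (simp add: norm_exp_eq_Re)

lemma continuous_on_e_power [continuous_intros]: "continuous_on S (\<lambda>x. e (\<beta> * x ^ k))"
  unfolding e_def by (intro continuous_intros)

lemma e_power_has_vector_derivative:
  assumes "\<beta> \<noteq> 0" "k \<ge> 1"
  shows "((\<lambda>x. e (\<beta> * x ^ k) / (2 * pi * \<i> * \<beta> * k)) has_vector_derivative
          of_real (x ^ (k - 1)) * e (\<beta> * x ^ k)) (at x within S)"
proof -
  have "((\<lambda>z. exp (2 * pi * \<i> * (of_real \<beta> * z ^ k)) / (2 * pi * \<i> * \<beta> * k)) has_field_derivative
          of_real x ^ (k - 1) * exp (2 * pi * \<i> * (of_real \<beta> * of_real x ^ k))) (at (of_real x))"
    using assms by (auto intro!: derivative_eq_intros)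
  from has_vector_derivative_real_field[OF this, of S] show ?thesis
    unfolding e_def by simp
qed

lemma e_power_integration_by_parts:
  fixes G G' :: "real \<Rightarrow> real"
  assumes "u \<le> v" "\<beta> \<noteq> 0" "k \<ge> 1"
    and G': "\<And>x. x \<in> {u..v} \<Longrightarrow> (G has_real_derivative G' x) (at x within {u..v})"
    and "continuous_on {u..v} G"
  defines "E \<equiv> \<lambda>x. e (\<beta> * x ^ k) / (2 * pi * \<i> * \<beta> * k)"
  shows "((\<lambda>x. of_real (G' x) * E x) has_integral
           of_real (G v) * E v - of_real (G u) * E u
             - integral {u..v} (\<lambda>x. of_real (G x * x ^ (k - 1)) * e (\<beta> * x ^ k))) {u..v}"
proof -
  let ?T = "\<lambda>x. of_real (G x * x ^ (k - 1)) * e (\<beta> * x ^ k)"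
  have "((\<lambda>x. of_real (G x) * E x) has_vector_derivative of_real (G' x) * E x + ?T x)
          (at x within {u..v})" if "x \<in> {u..v}" for x
    using has_vector_derivative_mult[OF has_vector_derivative_of_real[OF G'[OF that]]
        e_power_has_vector_derivative[OF assms(2,3)]]
    by (simp add: E_def algebra_simps)
  then have "((\<lambda>x. of_real (G' x) * E x + ?T x) has_integral
               of_real (G v) * E v - of_real (G u) * E u) {u..v}"
    by (intro fundamental_theorem_of_calculus) (auto simp: \<open>u \<le> v\<close>)
  moreover have "?T integrable_on {u..v}"
    by (intro integrable_continuous_real continuous_intros assms(5))
  ultimately show ?thesis
    by (auto dest: has_integral_diff[OF _ integrable_integral])
qed

lemma norm_integral_decreasing_e_power_le:
  fixes G G' :: "real \<Rightarrow> real"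
  assumes "u \<le> v" "\<beta> \<noteq> 0" "k \<ge> 1"
    and G': "\<And>x. x \<in> {u..v} \<Longrightarrow> (G has_real_derivative G' x) (at x within {u..v})"
    and "continuous_on {u..v} G"
    and G_nonneg: "\<And>x. x \<in> {u..v} \<Longrightarrow> G x \<ge> 0"
    and G'_nonpos: "\<And>x. x \<in> {u..v} \<Longrightarrow> G' x \<le> 0"
  shows "norm (integral {u..v} (\<lambda>x. of_real (G x * x ^ (k - 1)) * e (\<beta> * x ^ k)))
           \<le> G u / (pi * k * \<bar>\<beta>\<bar>)"
proof -
  define r where "r = 2 * pi * k * \<bar>\<beta>\<bar>"
  define E where "E = (\<lambda>x. e (\<beta> * x ^ k) / (2 * pi * \<i> * \<beta> * k))"
  let ?T = "integral {u..v} (\<lambda>x. of_real (G x * x ^ (k - 1)) * e (\<beta> * x ^ k))"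
  let ?R = "integral {u..v} (\<lambda>x. of_real (G' x) * E x)"
  have norm_E: "norm (E x) = 1 / r" for x
    using assms(3) by (simp add: E_def r_def norm_divide norm_mult)
  have parts: "((\<lambda>x. of_real (G' x) * E x) has_integral
      of_real (G v) * E v - of_real (G u) * E u - ?T) {u..v}"
    unfolding E_def by (rule e_power_integration_by_parts[OF assms(1-5)])
  have G'_int: "(G' has_integral (G v - G u)) {u..v}"
    by (intro fundamental_theorem_of_calculus)
       (use assms(1) G' in \<open>auto simp: has_real_derivative_iff_has_vector_derivative\<close>)
  have "norm ?R \<le> integral {u..v} (\<lambda>x. - G' x / r)"
  proof (rule integral_norm_bound_integral)
    show "(\<lambda>x. - G' x / r) integrable_on {u..v}"
      using has_integral_divide[OF has_integral_neg[OF G'_int], of r] by blast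
  qed (use parts G'_nonpos in \<open>auto simp: norm_mult norm_E\<close>)
  also have "\<dots> = (G u - G v) / r"
    using integral_unique[OF G'_int] by (simp add: integral_divide integral_neg diff_divide_distrib)
  finally have norm_R: "norm ?R \<le> (G u - G v) / r" .
  have T_eq: "?T = of_real (G v) * E v - of_real (G u) * E u - ?R"
    using integral_unique[OF parts] by simp
  have "norm ?T \<le> norm (of_real (G v) * E v) + norm (of_real (G u) * E u) + norm ?R"
    unfolding T_eq by (rule order_trans[OF norm_triangle_ineq4 add_mono[OF norm_triangle_ineq4 order_refl]])
  also have "\<dots> \<le> G v / r + G u / r + (G u - G v) / r"
    using norm_R G_nonneg[of u] G_nonneg[of v] assms(1) by (simp add: norm_mult norm_E)
  also have "\<dots> = G u / (pi * k * \<bar>\<beta>\<bar>)"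
    using assms(2,3) by (simp add: r_def field_simps)
  finally show ?thesis .
qed

lemma powr_derivative_has_integral:
  fixes u v d :: real
  assumes "0 < u" "u \<le> v"
  shows "((\<lambda>x. d * x powr (d - 1)) has_integral (v powr d - u powr d)) {u..v}"
proof (rule fundamental_theorem_of_calculus[OF assms(2)])
  fix x assume "x \<in> {u..v}"
  then have "x > 0" using assms(1) by simp
  then have "((\<lambda>x. x powr d) has_real_derivative d * x powr (d - 1)) (at x within {u..v})"
    by (auto intro!: derivative_eq_intros)
  then show "((\<lambda>x. x powr d) has_vector_derivative d * x powr (d - 1)) (at x within {u..v})"
    by (simp add: has_real_derivative_iff_has_vector_derivative)
qed

lemma norm_integral_le_powr_bound:
  fixes h :: "real \<Rightarrow> 'a::banach"
  assumes "0 < u" "u \<le> v" "h integrable_on {u..v}"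
    and "\<And>x. x \<in> {u..v} \<Longrightarrow> norm (h x) \<le> M * (d * x powr (d - 1))"
  shows "norm (integral {u..v} h) \<le> M * (v powr d - u powr d)"
proof -
  have bound: "((\<lambda>x. M * (d * x powr (d - 1))) has_integral M * (v powr d - u powr d)) {u..v}"
    by (intro has_integral_mult_right powr_derivative_has_integral assms(1,2))
  have "norm (integral {u..v} h) \<le> integral {u..v} (\<lambda>x. M * (d * x powr (d - 1)))"
    using bound assms(3,4) by (intro integral_norm_bound_integral) auto
  then show ?thesis
    using integral_unique[OF bound] by (simp del: integral_mult_right)
qed

lemma powr_derivative_has_integral_from_0:
  fixes d X :: real
  assumes "d > 0" "X \<ge> 0"
  shows "((\<lambda>x. d * x powr (d - 1)) has_integral X powr d) {0..X}"
  using has_integral_mult_right[OF has_integral_powr_from_0[of "d - 1" X], of d] assms by simp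

lemma absolutely_integrable_powr_e_power_from_0:
  fixes d X :: real
  assumes "d > 0" "X \<ge> 0"
  shows "(\<lambda>x. of_real (d * x powr (d - 1)) * e (\<beta> * x ^ k)) absolutely_integrable_on {0..X}"
proof -
  have "(\<lambda>x. d * x powr (d - 1)) absolutely_integrable_on {0..X}"
    using powr_derivative_has_integral_from_0[OF assms] assms(1)
    by (intro nonnegative_absolutely_integrable_1) auto
  from absolutely_integrable_linear[OF this bounded_linear_of_real]
  have "(\<lambda>x. complex_of_real (d * x powr (d - 1))) absolutely_integrable_on {0..X}"
    by (simp add: o_def)
  then have "(\<lambda>x. e (\<beta> * x ^ k) * of_real (d * x powr (d - 1))) absolutely_integrable_on {0..X}"
    by (intro absolutely_integrable_bounded_measurable_product[OF bilinear_times])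
       (auto intro: continuous_imp_measurable_on_sets_lebesgue continuous_intros
             simp: bounded_iff intro!: exI[of _ 1])
  then show ?thesis
    by (simp add: mult.commute)
qed

lemma norm_integral_powr_e_power_from_0_le:
  fixes d X :: real
  assumes "d > 0" "X \<ge> 0"
  shows "norm (integral {0..X} (\<lambda>x. of_real (d * x powr (d - 1)) * e (\<beta> * x ^ k))) \<le> X powr d"
proof -
  note weight = powr_derivative_has_integral_from_0[OF assms]
  have "norm (integral {0..X} (\<lambda>x. of_real (d * x powr (d - 1)) * e (\<beta> * x ^ k)))
      \<le> integral {0..X} (\<lambda>x. d * x powr (d - 1))"
    using absolutely_integrable_powr_e_power_from_0[OF assms] weight assms(1)
    by (intro integral_norm_bound_integral) (auto simp: norm_mult absolutely_integrable_on_def)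
  then show ?thesis
    using integral_unique[OF weight] by simp
qed

definition J_integral :: "real \<Rightarrow> nat \<Rightarrow> real \<Rightarrow> real \<Rightarrow> complex" where
  "J_integral d k \<beta> X = integral {2..X} (\<lambda>x. of_real (d * x powr (d - 1) / ln x) * e (\<beta> * x ^ k))"

definition I_integral :: "real \<Rightarrow> nat \<Rightarrow> real \<Rightarrow> real \<Rightarrow> complex" where
  "I_integral d k \<beta> X = integral {0..X} (\<lambda>x. of_real (d * x powr (d - 1)) * e (\<beta> * x ^ k))"

lemma J_integral_minus_I_integral_eq:
  fixes d X :: real
  assumes "d > 0" "X \<ge> 2"
  shows "J_integral d k \<beta> X - of_real (1 / ln X) * I_integral d k \<beta> X
       = integral {2..X} (\<lambda>x. of_real (d * x powr (d - 1) * (1 / ln x - 1 / ln X)) * e (\<beta> * x ^ k))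
         - of_real (1 / ln X) * I_integral d k \<beta> 2"
proof -
  let ?f = "\<lambda>x. of_real (d * x powr (d - 1)) * e (\<beta> * x ^ k)"
  let ?g = "\<lambda>x. of_real (d * x powr (d - 1) / ln x) * e (\<beta> * x ^ k)"
  have "?f integrable_on {0..X}"
    using absolutely_integrable_powr_e_power_from_0[of d X] assms
    by (simp add: absolutely_integrable_on_def)
  then have split: "I_integral d k \<beta> X = I_integral d k \<beta> 2 + integral {2..X} ?f"
    unfolding I_integral_def using assms(2)
    by (simp add: Henstock_Kurzweil_Integration.integral_combine)
  have "?g integrable_on {2..X}" "(\<lambda>x. of_real (1 / ln X) * ?f x) integrable_on {2..X}"
    by (intro integrable_continuous_real continuous_intros; auto)+
  then have "J_integral d k \<beta> X - of_real (1 / ln X) * integral {2..X} ?f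
      = integral {2..X} (\<lambda>x. ?g x - of_real (1 / ln X) * ?f x)"
    unfolding J_integral_def by (simp only: integral_diff integral_mult_right)
  also have "\<dots> = integral {2..X}
      (\<lambda>x. of_real (d * x powr (d - 1) * (1 / ln x - 1 / ln X)) * e (\<beta> * x ^ k))"
    by (intro integral_cong) (simp add: algebra_simps)
  finally show ?thesis
    unfolding split by (simp add: algebra_simps)
qed

lemma one_div_ln_le_three_halves:
  fixes x :: real
  assumes "2 \<le> x"
  shows "1 / ln x \<le> 3 / 2"
proof -
  have "1 / ln x \<le> 1 / ln 2"
    using assms by (intro divide_left_mono) auto
  also have "\<dots> \<le> 3 / 2"
    using ln2_ge_two_thirds by (simp add: field_simps)
  finally show ?thesis .
qed

lemma norm_J_integral_minus_I_integral_le_trivial: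
  fixes d X :: real
  assumes "d > 0" "X \<ge> 2"
  shows "norm (J_integral d k \<beta> X - of_real (1 / ln X) * I_integral d k \<beta> X) \<le> 3 * X powr d"
proof -
  have "norm (J_integral d k \<beta> X) \<le> 3 / 2 * (X powr d - 2 powr d)"
    unfolding J_integral_def
  proof (rule norm_integral_le_powr_bound)
    show "(\<lambda>x. of_real (d * x powr (d - 1) / ln x) * e (\<beta> * x ^ k)) integrable_on {2..X}"
      by (intro integrable_continuous_real continuous_intros) auto
    fix x assume x: "x \<in> {2..X}"
    have "norm (of_real (d * x powr (d - 1) / ln x) * e (\<beta> * x ^ k)) = 1 / ln x * (d * x powr (d - 1))"
      unfolding norm_mult norm_of_real norm_e using x assms(1) by simp
    also have "\<dots> \<le> 3 / 2 * (d * x powr (d - 1))"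
      using x assms(1) by (intro mult_right_mono one_div_ln_le_three_halves) auto
    finally show "norm (of_real (d * x powr (d - 1) / ln x) * e (\<beta> * x ^ k)) \<le> 3 / 2 * (d * x powr (d - 1))" .
  qed (use assms in auto)
  also have "\<dots> \<le> 3 / 2 * X powr d"
    by simp
  finally have "norm (J_integral d k \<beta> X) \<le> 3 / 2 * X powr d" .
  moreover have "norm (of_real (1 / ln X) * I_integral d k \<beta> X) \<le> 3 / 2 * X powr d"
    unfolding I_integral_def norm_mult norm_of_real
    using one_div_ln_le_three_halves[OF assms(2)] norm_integral_powr_e_power_from_0_le[of d X \<beta> k] assms
    by (intro mult_mono) auto
  ultimately show ?thesis
    using norm_triangle_ineq4[of "J_integral d k \<beta> X" "of_real (1 / ln X) * I_integral d k \<beta> X"]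
    by linarith
qed

lemma log_weight_bounds:
  fixes u x X :: real
  assumes "2 \<le> u" "u \<le> x" "x \<le> X"
  shows "0 \<le> 1 / ln x - 1 / ln X" "1 / ln x - 1 / ln X \<le> 1 / ln u - 1 / ln X"
proof -
  have "0 < ln u" "ln u \<le> ln x" "ln x \<le> ln X"
    using assms by auto
  then show "0 \<le> 1 / ln x - 1 / ln X" "1 / ln x - 1 / ln X \<le> 1 / ln u - 1 / ln X"
    by (auto intro: divide_left_mono)
qed

lemma norm_integral_log_weight_le_trivial:
  fixes d u v X W :: real
  assumes "d > 0" "2 \<le> u" "u \<le> v" "v \<le> X" "1 / ln u - 1 / ln X \<le> W"
  shows "norm (integral {u..v} (\<lambda>x. of_real (d * x powr (d - 1) * (1 / ln x - 1 / ln X)) * e (\<beta> * x ^ k)))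
           \<le> W * (v powr d - u powr d)"
proof (rule norm_integral_le_powr_bound)
  show "(\<lambda>x. of_real (d * x powr (d - 1) * (1 / ln x - 1 / ln X)) * e (\<beta> * x ^ k)) integrable_on {u..v}"
    using assms(2) by (intro integrable_continuous_real continuous_intros) auto
  fix x assume x: "x \<in> {u..v}"
  then have w: "0 \<le> 1 / ln x - 1 / ln X" "1 / ln x - 1 / ln X \<le> W"
    using log_weight_bounds[of u x X] assms by auto
  have "norm (of_real (d * x powr (d - 1) * (1 / ln x - 1 / ln X)) * e (\<beta> * x ^ k))
      = (1 / ln x - 1 / ln X) * (d * x powr (d - 1))"
    unfolding norm_mult norm_of_real norm_e using w assms(1) by simp
  also have "\<dots> \<le> W * (d * x powr (d - 1))"
    using w assms(1) by (intro mult_right_mono) auto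
  finally show "norm (of_real (d * x powr (d - 1) * (1 / ln x - 1 / ln X)) * e (\<beta> * x ^ k))
      \<le> W * (d * x powr (d - 1))" .
qed (use assms in auto)

lemma norm_integral_log_weight_le_oscillatory:
  fixes d u X W :: real
  assumes "0 < d" "d \<le> 1" "k \<ge> 1" "\<beta> \<noteq> 0" "2 \<le> u" "u \<le> X" "1 / ln u - 1 / ln X \<le> W"
  shows "norm (integral {u..X} (\<lambda>x. of_real (d * x powr (d - 1) * (1 / ln x - 1 / ln X)) * e (\<beta> * x ^ k)))
           \<le> W * u powr (d - real k) / \<bar>\<beta>\<bar>"
proof -
  define G where "G = (\<lambda>x. d * x powr (d - real k) * (1 / ln x - 1 / ln X))"
  define G' where "G' = (\<lambda>x. d * (d - real k) * x powr (d - real k - 1) * (1 / ln x - 1 / ln X)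
                              - d * x powr (d - real k) / (x * (ln x)\<^sup>2))"
  have w: "0 \<le> 1 / ln x - 1 / ln X" "1 / ln x - 1 / ln X \<le> W" if "x \<in> {u..X}" for x
    using that log_weight_bounds[of u x X] assms(5,7) by auto
  have "integral {u..X} (\<lambda>x. of_real (d * x powr (d - 1) * (1 / ln x - 1 / ln X)) * e (\<beta> * x ^ k))
      = integral {u..X} (\<lambda>x. of_real (G x * x ^ (k - 1)) * e (\<beta> * x ^ k))"
  proof (rule integral_cong)
    fix x assume "x \<in> {u..X}"
    then have "x > 0" using assms(5) by auto
    then have "x powr (d - 1) = x powr (d - real k) * x ^ (k - 1)"
      using assms(3) by (simp add: powr_realpow[symmetric] powr_add[symmetric] of_nat_diff)
    then show "of_real (d * x powr (d - 1) * (1 / ln x - 1 / ln X)) * e (\<beta> * x ^ k)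
        = of_real (G x * x ^ (k - 1)) * e (\<beta> * x ^ k)"
      by (simp add: G_def)
  qed
  also have "norm \<dots> \<le> G u / (pi * k * \<bar>\<beta>\<bar>)"
  proof (rule norm_integral_decreasing_e_power_le[OF assms(6,4,3)])
    show "continuous_on {u..X} G"
      unfolding G_def using assms(5) by (intro continuous_intros) auto
    fix x assume x: "x \<in> {u..X}"
    then have "x > 1" using assms(5) by auto
    then show "(G has_real_derivative G' x) (at x within {u..X})"
      unfolding G_def G'_def by (auto intro!: derivative_eq_intros simp: power2_eq_square)
    show "G x \<ge> 0"
      using w[OF x] assms(1) by (simp add: G_def)
    have "d * (d - real k) * x powr (d - real k - 1) * (1 / ln x - 1 / ln X) \<le> 0"
      using w[OF x] assms(1-3) by (intro mult_nonpos_nonneg mult_nonneg_nonpos) auto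
    moreover have "d * x powr (d - real k) / (x * (ln x)\<^sup>2) \<ge> 0"
      using \<open>x > 1\<close> assms(1) by simp
    ultimately show "G' x \<le> 0"
      by (simp add: G'_def)
  qed
  also have "\<dots> \<le> W * u powr (d - real k) / \<bar>\<beta>\<bar>"
  proof -
    have "1 * 1 \<le> pi * real k"
      using assms(3) pi_gt3 by (intro mult_mono) auto
    then have "1 * \<bar>\<beta>\<bar> \<le> (pi * k) * \<bar>\<beta>\<bar>"
      by (intro mult_right_mono) auto
    moreover have "d * (1 / ln u - 1 / ln X) \<le> 1 * W"
      using w[of u] assms(1,2,5,6) by (intro mult_mono) auto
    from mult_right_mono[OF this powr_ge_zero[of u "d - real k"]]
    have "G u \<le> W * u powr (d - real k)"
      by (simp add: G_def ac_simps)
    ultimately show ?thesis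
      using assms(4) w[of u] assms(5-7) by (intro frac_le) auto
  qed
  finally show ?thesis .
qed

lemma powr_diff_div_le:
  fixes b d u :: real
  assumes "0 < b" "k \<ge> 1" "d \<le> real k" "b powr (- 1 / real k) \<le> u"
  shows "u powr (d - real k) / b \<le> b powr (- d / real k)"
proof -
  have "u powr (d - real k) \<le> (b powr (- 1 / real k)) powr (d - real k)"
    using assms by (intro powr_mono2') auto
  also have "\<dots> = b powr (- d / real k) * b"
    using assms(1,2) by (simp add: powr_powr powr_diff diff_divide_distrib)
  finally show ?thesis
    using assms(1) by (simp add: divide_le_eq)
qed

lemma norm_integral_log_weight_le:
  fixes d a X W :: real
  assumes "0 < d" "d \<le> 1" "k \<ge> 1" "\<beta> \<noteq> 0" "2 \<le> a" "a \<le> X" "1 / ln a - 1 / ln X \<le> W"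
  shows "norm (integral {a..X} (\<lambda>x. of_real (d * x powr (d - 1) * (1 / ln x - 1 / ln X)) * e (\<beta> * x ^ k)))
           \<le> 2 * W * min (X powr d) (\<bar>\<beta>\<bar> powr (- d / real k))"
proof -
  define F where "F = (\<lambda>x. of_real (d * x powr (d - 1) * (1 / ln x - 1 / ln X)) * e (\<beta> * x ^ k))"
  define Y where "Y = \<bar>\<beta>\<bar> powr (- 1 / real k)"
  have Y: "Y > 0" "Y powr d = \<bar>\<beta>\<bar> powr (- d / real k)"
    using assms(4) by (simp_all add: Y_def powr_powr)
  have W: "W \<ge> 0"
    using log_weight_bounds[of a a X] assms(5-7) by linarith
  have W_above: "1 / ln u - 1 / ln X \<le> W" if "a \<le> u" "u \<le> X" for u
    using log_weight_bounds[of a u X] assms(5,7) that by linarith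
  have trivial: "norm (integral {u..v} F) \<le> W * v powr d" if "a \<le> u" "u \<le> v" "v \<le> X" for u v
  proof -
    have "norm (integral {u..v} F) \<le> W * (v powr d - u powr d)"
      unfolding F_def using W_above[of u] assms(1,5) that
      by (intro norm_integral_log_weight_le_trivial) auto
    also have "\<dots> \<le> W * v powr d"
      using W by (simp add: mult_left_mono)
    finally show ?thesis .
  qed
  have oscillatory: "norm (integral {u..X} F) \<le> W * Y powr d" if "a \<le> u" "u \<le> X" "Y \<le> u" for u
  proof -
    have "norm (integral {u..X} F) \<le> W * (u powr (d - real k) / \<bar>\<beta>\<bar>)"
      using norm_integral_log_weight_le_oscillatory[of d k \<beta> u X W] W_above[of u] assms(1-5) that
      by (simp add: F_def)
    also have "\<dots> \<le> W * Y powr d"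
      using powr_diff_div_le[of "\<bar>\<beta>\<bar>" k d u] W Y(2) assms(2-4) that(3)
      by (intro mult_left_mono) (auto simp: Y_def)
    finally show ?thesis .
  qed
  have WY: "W * Y powr d \<ge> 0"
    using W by simp
  consider "Y \<le> a" | "a < Y" "Y \<le> X" | "X < Y"
    by linarith
  then have "norm (integral {a..X} F) \<le> 2 * W * min (X powr d) (Y powr d)"
  proof cases
    case 1
    then have "min (X powr d) (Y powr d) = Y powr d"
      using Y(1) assms(1,6) by (simp add: powr_mono2)
    then show ?thesis
      using oscillatory[of a] 1 assms(6) WY by simp
  next
    case 2
    then have "integral {a..X} F = integral {a..Y} F + integral {Y..X} F"
      using assms(5) unfolding F_def
      by (intro Henstock_Kurzweil_Integration.integral_combine[symmetric]
            integrable_continuous_real continuous_intros) auto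
    moreover have "min (X powr d) (Y powr d) = Y powr d"
      using 2 Y(1) assms(1) by (simp add: powr_mono2)
    ultimately show ?thesis
      using trivial[of a Y] oscillatory[of Y] 2 norm_triangle_ineq[of "integral {a..Y} F" "integral {Y..X} F"]
      by simp
  next
    case 3
    then have "min (X powr d) (Y powr d) = X powr d"
      using assms(1,5,6) by (simp add: powr_mono2)
    then show ?thesis
      using trivial[of a X] assms(6) mult_nonneg_nonneg[OF W powr_ge_zero[of X d]] by simp
  qed
  then show ?thesis
    unfolding F_def Y(2) .
qed

lemma mult_ln_le_half:
  fixes A L :: real
  assumes "A > 0" "L > 0" "4 * A * ln (4 * A) \<le> L"
  shows "A * ln L \<le> L / 2"
proof -
  have "ln L = ln (4 * A) + ln (L / (4 * A))"
    using assms(1,2) by (simp add: ln_div)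
  also have "\<dots> \<le> ln (4 * A) + L / (4 * A)"
    using ln_le_minus_one[of "L / (4 * A)"] assms(1,2) by simp
  finally have "A * ln L \<le> A * (ln (4 * A) + L / (4 * A))"
    using assms(1) by (simp add: mult_left_mono)
  also have "\<dots> = A * ln (4 * A) + L / 4"
    using assms(1) by (simp add: field_simps)
  finally show ?thesis
    using assms(3) by linarith
qed

lemma log_cutoff:
  fixes A d X :: real
  assumes "1 \<le> A" "0 < X" "2 + 4 * A * ln (4 * A) \<le> ln X"
  obtains a where "2 \<le> a" "a \<le> X" "a powr d = X powr d / ln X powr (A * d)"
    "1 / ln a - 1 / ln X \<le> 2 * A * ln (ln X) / (ln X)\<^sup>2"
proof
  define L where "L = ln X"
  have "0 \<le> 4 * A * ln (4 * A)"
    using assms(1) by (intro mult_nonneg_nonneg) auto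
  then have L: "L \<ge> 2"
    using assms(3) by (simp add: L_def)
  then have "X > 1"
    using ln_le_minus_one[OF assms(2)] by (simp add: L_def)
  define a where "a = X * L powr (- A)"
  have "A * ln L \<le> L / 2"
    using assms L \<open>X > 1\<close> by (intro mult_ln_le_half) (auto simp: L_def)
  moreover have ln_a: "ln a = L - A * ln L"
    using assms(2) L by (simp add: a_def ln_mult ln_powr L_def)
  ultimately have ln_a_ge: "L / 2 \<le> ln a"
    by linarith
  have "a > 0"
    using assms(2) L by (simp add: a_def)
  moreover have "ln 2 \<le> ln a"
    using ln_a_ge L ln_2_less_1 by linarith
  ultimately show "2 \<le> a"
    by simp
  have "1 \<le> L powr A"
    using L assms(1) by (intro ge_one_powr_ge_zero) auto
  then have "X * 1 \<le> X * L powr A"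
    using assms(2) by (intro mult_left_mono) auto
  then show "a \<le> X"
    using L by (simp add: a_def powr_minus_divide divide_le_eq mult.commute)
  have "a powr d = X powr d * (L powr (- A)) powr d"
    using assms(2) L by (simp add: a_def powr_mult)
  also have "\<dots> = X powr d / ln X powr (A * d)"
    unfolding powr_powr by (simp add: powr_minus divide_inverse L_def)
  finally show "a powr d = X powr d / ln X powr (A * d)" .
  have "1 / ln a - 1 / L = (A * ln L) / (L * ln a)"
    using ln_a ln_a_ge L by (simp add: field_simps)
  also have "\<dots> \<le> (A * ln L) / (L * (L / 2))"
    using ln_a_ge L assms(1) by (intro divide_left_mono mult_left_mono mult_nonneg_nonneg) auto
  also have "\<dots> = 2 * A * ln L / L\<^sup>2"
    by (simp add: power2_eq_square)
  finally show "1 / ln a - 1 / ln X \<le> 2 * A * ln (ln X) / (ln X)\<^sup>2"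
    by (simp add: L_def)
qed

lemma norm_J_integral_minus_I_integral_le_large:
  fixes d A X :: real
  assumes "0 < d" "d \<le> 1" "k \<ge> 1" "\<beta> \<noteq> 0" "1 \<le> A" "0 < X" "2 + 4 * A * ln (4 * A) \<le> ln X"
  shows "norm (J_integral d k \<beta> X - of_real (1 / ln X) * I_integral d k \<beta> X)
           \<le> 3 * X powr d / ln X powr (A * d)
             + 4 * A * min (X powr d) (\<bar>\<beta>\<bar> powr (- d / real k)) * ln (ln X) / (ln X)\<^sup>2"
proof -
  define F where "F = (\<lambda>x. of_real (d * x powr (d - 1) * (1 / ln x - 1 / ln X)) * e (\<beta> * x ^ k))"
  obtain a where a: "2 \<le> a" "a \<le> X" "a powr d = X powr d / ln X powr (A * d)"
    and weight_a: "1 / ln a - 1 / ln X \<le> 2 * A * ln (ln X) / (ln X)\<^sup>2"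
    using log_cutoff[OF assms(5-7)] .
  have "0 \<le> 4 * A * ln (4 * A)"
    using assms(5) by (intro mult_nonneg_nonneg) auto
  then have "0 < 1 / ln X" "1 / ln X \<le> 1"
    using assms(7) by auto
  have "integral {2..X} F = integral {2..a} F + integral {a..X} F"
    using a(1,2) unfolding F_def
    by (intro Henstock_Kurzweil_Integration.integral_combine[symmetric]
          integrable_continuous_real continuous_intros) auto
  then have split: "J_integral d k \<beta> X - of_real (1 / ln X) * I_integral d k \<beta> X
      = integral {2..a} F + integral {a..X} F - of_real (1 / ln X) * I_integral d k \<beta> 2"
    using J_integral_minus_I_integral_eq[of d X k \<beta>] a(1,2) assms(1) by (simp add: F_def)
  have "1 / ln 2 - 1 / ln X \<le> 2"
    using one_div_ln_le_three_halves[of 2] \<open>0 < 1 / ln X\<close> by linarith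
  then have "norm (integral {2..a} F) \<le> 2 * (a powr d - 2 powr d)"
    unfolding F_def using a(1,2) assms(1) by (intro norm_integral_log_weight_le_trivial) auto
  also have "\<dots> \<le> 2 * a powr d"
    by simp
  finally have head: "norm (integral {2..a} F) \<le> 2 * a powr d" .
  have tail: "norm (integral {a..X} F)
      \<le> 4 * A * min (X powr d) (\<bar>\<beta>\<bar> powr (- d / real k)) * ln (ln X) / (ln X)\<^sup>2"
    using norm_integral_log_weight_le[OF assms(1-4) a(1,2) weight_a] by (simp add: F_def ac_simps)
  have "norm (of_real (1 / ln X) * I_integral d k \<beta> 2) \<le> 1 * 2 powr d"
    unfolding I_integral_def norm_mult norm_of_real
    using norm_integral_powr_e_power_from_0_le[of d 2 \<beta> k] assms(1) \<open>0 < 1 / ln X\<close> \<open>1 / ln X \<le> 1\<close>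
    by (intro mult_mono) auto
  also have "\<dots> \<le> a powr d"
    using a(1) assms(1) by (simp add: powr_mono2)
  finally have near_0: "norm (of_real (1 / ln X) * I_integral d k \<beta> 2) \<le> a powr d" .
  have "3 * X powr d / ln X powr (A * d) = 3 * a powr d"
    by (simp add: a(3))
  then show ?thesis
    unfolding split
    using head tail near_0 norm_triangle_ineq[of "integral {2..a} F" "integral {a..X} F"]
      norm_triangle_ineq4[of "integral {2..a} F + integral {a..X} F"
        "of_real (1 / ln X) * I_integral d k \<beta> 2"]
    by linarith
qed

lemma norm_J_integral_minus_I_integral_le_bounded_log:
  fixes d B L\<^sub>0 X :: real
  assumes "0 < d" "0 \<le> B" "2 \<le> X" "ln X \<le> L\<^sub>0"
  shows "norm (J_integral d k \<beta> X - of_real (1 / ln X) * I_integral d k \<beta> X)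
           \<le> 3 * L\<^sub>0 powr B * (X powr d / ln X powr B)"
proof -
  have "0 < ln X"
    using assms(3) by simp
  then have "ln X powr B \<le> L\<^sub>0 powr B"
    using assms(2,4) by (intro powr_mono2) auto
  then have "1 \<le> L\<^sub>0 powr B / ln X powr B"
    using \<open>0 < ln X\<close> by simp
  then have "3 * X powr d * 1 \<le> 3 * X powr d * (L\<^sub>0 powr B / ln X powr B)"
    by (intro mult_left_mono) auto
  then have "3 * X powr d \<le> 3 * L\<^sub>0 powr B * (X powr d / ln X powr B)"
    by (simp add: field_simps)
  then show ?thesis
    using norm_J_integral_minus_I_integral_le_trivial[OF assms(1,3), of k \<beta>] by linarith
qed

lemma norm_J_integral_minus_I_integral_le:
  fixes d A :: real
  assumes "0 < d" "d \<le> 1" "k \<ge> 2" "1 \<le> A"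
  shows "\<exists>C>0. \<forall>X \<beta>. X > 2 \<longrightarrow> \<beta> \<noteq> 0 \<longrightarrow>
    norm (J_integral d k \<beta> X - of_real (1 / ln X) * I_integral d k \<beta> X)
      \<le> C * (X powr d / ln X powr (A * d)
             + min (X powr d) (\<bar>\<beta>\<bar> powr (- d / real k)) * ln (real k * ln X) / (ln X)\<^sup>2)"
proof (intro exI[of _ "3 * (2 + 4 * A * ln (4 * A)) powr (A * d) + 4 * A"] conjI allI impI)
  define L\<^sub>0 where "L\<^sub>0 = 2 + 4 * A * ln (4 * A)"
  define C where "C = 3 * L\<^sub>0 powr (A * d) + 4 * A"
  have "0 \<le> 4 * A * ln (4 * A)"
    using assms(4) by (intro mult_nonneg_nonneg) auto
  then have "1 \<le> L\<^sub>0 powr (A * d)"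
    using assms(1,4) by (intro ge_one_powr_ge_zero) (auto simp: L\<^sub>0_def)
  then have C: "3 * L\<^sub>0 powr (A * d) \<le> C" "4 * A \<le> C" "3 \<le> C"
    using assms(4) by (auto simp: C_def)
  then show "0 < 3 * (2 + 4 * A * ln (4 * A)) powr (A * d) + 4 * A"
    by (simp add: C_def L\<^sub>0_def)
  fix X \<beta> :: real
  assume "X > 2" and "\<beta> \<noteq> 0"
  define P where "P = X powr d / ln X powr (A * d)"
  define S where "S = (\<lambda>t. min (X powr d) (\<bar>\<beta>\<bar> powr (- d / real k)) * t / (ln X)\<^sup>2)"
  have "2 / 3 < ln X"
    using \<open>X > 2\<close> ln2_ge_two_thirds ln_less_cancel_iff[of 2 X] by linarith
  then have "0 < ln X" "1 < real k * ln X"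
    using mult_mono[of 2 "real k" "2 / 3" "ln X"] assms(3) by auto
  then have "0 \<le> ln (real k * ln X)" "ln (ln X) \<le> ln (real k * ln X)"
    using assms(3) by auto
  then have S: "0 \<le> S (ln (real k * ln X))" "S (ln (ln X)) \<le> S (ln (real k * ln X))"
    by (auto simp: S_def intro!: divide_right_mono mult_left_mono)
  have P: "0 \<le> P"
    by (simp add: P_def)
  have "norm (J_integral d k \<beta> X - of_real (1 / ln X) * I_integral d k \<beta> X)
      \<le> C * P + C * S (ln (real k * ln X))"
  proof (cases "L\<^sub>0 \<le> ln X")
    case True
    have "norm (J_integral d k \<beta> X - of_real (1 / ln X) * I_integral d k \<beta> X)
        \<le> 3 * P + 4 * A * S (ln (ln X))"
      using norm_J_integral_minus_I_integral_le_large[of d k \<beta> A X] assms \<open>\<beta> \<noteq> 0\<close> \<open>X > 2\<close> True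
      by (simp add: L\<^sub>0_def P_def S_def mult.assoc)
    also have "\<dots> \<le> C * P + C * S (ln (real k * ln X))"
      using mult_right_mono[OF C(3) P] mult_left_mono[OF S(2), of "4 * A"]
        mult_right_mono[OF C(2) S(1)] assms(4) by linarith
    finally show ?thesis .
  next
    case False
    have "norm (J_integral d k \<beta> X - of_real (1 / ln X) * I_integral d k \<beta> X)
        \<le> 3 * L\<^sub>0 powr (A * d) * P"
      unfolding P_def using False \<open>X > 2\<close> assms(1,4)
      by (intro norm_J_integral_minus_I_integral_le_bounded_log) auto
    also have "\<dots> \<le> C * P + C * S (ln (real k * ln X))"
      using mult_right_mono[OF C(1) P] mult_nonneg_nonneg[OF _ S(1), of C] C(3) by linarith
    finally show ?thesis .
  qed
  then show "norm (J_integral d k \<beta> X - of_real (1 / ln X) * I_integral d k \<beta> X)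
      \<le> (3 * (2 + 4 * A * ln (4 * A)) powr (A * d) + 4 * A)
        * (X powr d / ln X powr (A * d)
           + min (X powr d) (\<bar>\<beta>\<bar> powr (- d / real k)) * ln (real k * ln X) / (ln X)\<^sup>2)"
    by (simp add: C_def L\<^sub>0_def P_def S_def distrib_left mult.assoc)
qed

theorem lemma6:
  fixes k :: nat and c \<kappa> :: real
  assumes "k \<ge> 3" and "c > 1" and "\<kappa> > 0"
  shows "\<exists>C>0. \<forall>N::nat. \<forall>\<beta>::real.
    N > 0 \<longrightarrow> real N powr (1 / real k) > 2 \<longrightarrow> \<beta> \<noteq> 0 \<longrightarrow>
    cmod (calJ c k N \<beta> - complex_of_real (1 / ln (real N powr (1 / real k))) * calI c k N \<beta>)
      \<le> C * (real N powr ((1/c) / real k) / ln (real N powr (1 / real k)) powr (\<kappa> + 2)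
             + min (real N powr ((1/c) / real k)) (\<bar>\<beta>\<bar> powr (- (1/c) / real k))
               * ln (ln (real N)) / (ln (real N powr (1 / real k)))\<^sup>2)"
proof -
  have "1 * 1 \<le> (\<kappa> + 2) * c"
    using assms(2,3) by (intro mult_mono) auto
  then obtain C where "C > 0" and C: "\<And>X \<beta>. X > 2 \<Longrightarrow> \<beta> \<noteq> 0 \<Longrightarrow>
      norm (J_integral (1 / c) k \<beta> X - of_real (1 / ln X) * I_integral (1 / c) k \<beta> X)
        \<le> C * (X powr (1 / c) / ln X powr ((\<kappa> + 2) * c * (1 / c))
               + min (X powr (1 / c)) (\<bar>\<beta>\<bar> powr (- (1 / c) / real k)) * ln (real k * ln X) / (ln X)\<^sup>2)"
    using norm_J_integral_minus_I_integral_le[of "1 / c" k "(\<kappa> + 2) * c"] assms(1,2) by auto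
  show ?thesis
  proof (intro exI[of _ C] conjI allI impI)
    fix N :: nat and \<beta> :: real
    assume "N > 0" and X: "real N powr (1 / real k) > 2" and "\<beta> \<noteq> 0"
    have "ln (ln (real N)) = ln (real k * ln (real N powr (1 / real k)))"
      using \<open>N > 0\<close> assms(1) by (simp add: ln_powr)
    moreover have "real N powr ((1 / c) / real k) = (real N powr (1 / real k)) powr (1 / c)"
      by (simp add: powr_powr mult.commute)
    moreover have "(\<kappa> + 2) * c * (1 / c) = \<kappa> + 2"
      using assms(2) by simp
    ultimately show "cmod (calJ c k N \<beta> - of_real (1 / ln (real N powr (1 / real k))) * calI c k N \<beta>)
      \<le> C * (real N powr ((1/c) / real k) / ln (real N powr (1 / real k)) powr (\<kappa> + 2)
             + min (real N powr ((1/c) / real k)) (\<bar>\<beta>\<bar> powr (- (1/c) / real k))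
               * ln (ln (real N)) / (ln (real N powr (1 / real k)))\<^sup>2)"
      using C[OF X \<open>\<beta> \<noteq> 0\<close>] by (simp add: calJ_def calI_def J_integral_def I_integral_def)
  qed (fact \<open>C > 0\<close>)
qed

end
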